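(* Let $a,a',b,b':\mathbb{Z}\to\mathbb{C}$ be functions none of which is identically zero, and suppose $a(\mathbb{K})fb(\mathbb{K})=a'(\mathbb{K})fb'(\mathbb{K})$ for all $f\in\mathcal{D}$. Then there is a nonzero constant $\mu$ such that $a'(k)=\mu a(k)$ and $b'(k)=\frac1\mu b(k)$ for all $k\in\mathbb{Z}$.
   Context: Let $\{E_k\}$ be the canonical basis of $\ell^2(\mathbb{Z})$, $UE_k=E_{k+1}$, $\mathbb{K}E_k=kE_k$, and $a(\mathbb{K})E_k=a(k)E_k$ for $a:\mathbb{Z}\to\mathbb{C}$. $\mathcal{D}$ is the space of finite sums $f=\sum_nU^nf_n(\mathbb{K})$ with each $f_n:\mathbb{Z}\to\mathbb{C}$ finitely supported (operators on $\ell^2(\mathbb{Z})$ with finitely many nonzero matrix entries); the products are operator products. *)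

theory Defs
  imports Complex_Main
begin

(* Operators are modelled by their action on sequences x :: int => complex
   (coordinates w.r.t. the canonical basis E_k of l^2(Z)). *)

(* U^n, where U E_k = E_(k+1); so (U^n x)(k) = x(k - n). *)
definition Upow :: "int \<Rightarrow> (int \<Rightarrow> complex) \<Rightarrow> (int \<Rightarrow> complex)" where
  "Upow n x = (\<lambda>k. x (k - n))"

definition mulK :: "(int \<Rightarrow> complex) \<Rightarrow> (int \<Rightarrow> complex) \<Rightarrow> (int \<Rightarrow> complex)" where
  "mulK a x = (\<lambda>k. a k * x k)"

definition calD :: "((int \<Rightarrow> complex) \<Rightarrow> (int \<Rightarrow> complex)) set" where
  "calD = {T. \<exists>N :: int set. \<exists>fs :: int \<Rightarrow> int \<Rightarrow> complex.
              finite N \<and> (\<forall>n\<in>N. finite {k. fs n k \<noteq> 0}) \<and>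
              T = (\<lambda>x k. \<Sum>n\<in>N. Upow n (mulK (fs n) x) k)}"

end

theory Submission
  imports Defs
begin

text \<open>Sandwiching the matrix unit \<open>E\<^sub>i\<langle>E\<^sub>j, \<cdot>\<rangle>\<close> (which lies in \<open>\<D>\<close>) between
  \<open>a(\<K>)\<close> and \<open>b(\<K>)\<close> yields \<open>a(i) b(j)\<close> times the same matrix unit, so the hypothesis
  forces \<open>a(i) b(j) = a'(i) b'(j)\<close> for all \<open>i, j\<close>. Over a field,
  an outer product of two nonzero vectors determines its factors up to reciprocal scalars.\<close>

lemma outer_product_eq_imp_reciprocal_scaling:
  fixes a a' :: "'i \<Rightarrow> 'a::field" and b b' :: "'j \<Rightarrow> 'a"
  assumes "a \<noteq> (\<lambda>_. 0)" and "b \<noteq> (\<lambda>_. 0)"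
    and outer_eq: "\<And>i j. a i * b j = a' i * b' j"
  shows "\<exists>\<mu>. \<mu> \<noteq> 0 \<and> (\<forall>i. a' i = \<mu> * a i) \<and> (\<forall>j. b' j = (1 / \<mu>) * b j)"
proof -
  obtain i0 where a_i0: "a i0 \<noteq> 0" using assms(1) by auto
  obtain j0 where b_j0: "b j0 \<noteq> 0" using assms(2) by auto
  have "a' i0 * b' j0 \<noteq> 0" using outer_eq[of i0 j0] a_i0 b_j0 by (metis mult_eq_0_iff)
  then have a'_i0: "a' i0 \<noteq> 0" and b'_j0: "b' j0 \<noteq> 0" by auto
  define \<mu> where "\<mu> = a' i0 / a i0"
  have \<mu>_alt: "\<mu> = b j0 / b' j0"
    using outer_eq[of i0 j0] a_i0 b'_j0 by (simp add: \<mu>_def field_simps)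
  show ?thesis
  proof (intro exI conjI allI)
    show "\<mu> \<noteq> 0" using a_i0 a'_i0 by (simp add: \<mu>_def)
  next
    fix i
    show "a' i = \<mu> * a i"
      using outer_eq[of i j0] b'_j0 by (simp add: \<mu>_alt field_simps)
  next
    fix j
    show "b' j = (1 / \<mu>) * b j"
      using outer_eq[of i0 j] a_i0 a'_i0 by (simp add: \<mu>_def field_simps)
  qed
qed

definition matrix_unit :: "int \<Rightarrow> int \<Rightarrow> (int \<Rightarrow> complex) \<Rightarrow> (int \<Rightarrow> complex)" where
  "matrix_unit i j x = (\<lambda>k. if k = i then x j else 0)"

lemma matrix_unit_in_calD: "matrix_unit i j \<in> calD"
  unfolding calD_def
proof (intro CollectI exI conjI)
  let ?e = "\<lambda>k. if k = j then 1 else (0::complex)"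
  show "finite {i - j}" by simp
  show "\<forall>n\<in>{i - j}. finite {k. ?e k \<noteq> 0}" by simp
  show "matrix_unit i j = (\<lambda>x k. \<Sum>n\<in>{i - j}. Upow n (mulK ?e x) k)"
    by (intro ext) (auto simp: matrix_unit_def Upow_def mulK_def)
qed

lemma mulK_matrix_unit_mulK_apply:
  "(mulK a \<circ> matrix_unit i j \<circ> mulK b) x i = a i * b j * x j"
  by (simp add: matrix_unit_def mulK_def)

lemma sandwich_eq_imp_outer_product_eq:
  assumes "\<forall>f\<in>calD. mulK a \<circ> f \<circ> mulK b = mulK a' \<circ> f \<circ> mulK b'"
  shows "a i * b j = a' i * b' j"
proof -
  have "mulK a \<circ> matrix_unit i j \<circ> mulK b = mulK a' \<circ> matrix_unit i j \<circ> mulK b'"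
    using assms matrix_unit_in_calD by blast
  then have "(mulK a \<circ> matrix_unit i j \<circ> mulK b) (\<lambda>_. 1) i
           = (mulK a' \<circ> matrix_unit i j \<circ> mulK b') (\<lambda>_. 1) i" by simp
  then show ?thesis by (simp only: mulK_matrix_unit_mulK_apply mult_1_right)
qed

theorem mainTheorem17:
  fixes a a' b b' :: "int \<Rightarrow> complex"
  assumes "a \<noteq> (\<lambda>_. 0)" and "a' \<noteq> (\<lambda>_. 0)"
    and "b \<noteq> (\<lambda>_. 0)" and "b' \<noteq> (\<lambda>_. 0)"
    and "\<forall>f\<in>calD. mulK a \<circ> f \<circ> mulK b = mulK a' \<circ> f \<circ> mulK b'"
  shows "\<exists>\<mu>::complex. \<mu> \<noteq> 0 \<and> (\<forall>k. a' k = \<mu> * a k \<and> b' k = (1 / \<mu>) * b k)"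
proof -
  have "\<And>i j. a i * b j = a' i * b' j"
    using sandwich_eq_imp_outer_product_eq[OF assms(5)] .
  then show ?thesis
    using outer_product_eq_imp_reciprocal_scaling[OF assms(1,3)] by blast
qed

end
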